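(* Let $\mathrm{H}$ be a set of Horn rules, $\mathcal{G}$ a g-sequent, and $\mathbf{G}=\mathbf{G}(\mathrm{H})$. For every string $s$ over $\mathtt{E}\cup\overline{\mathtt{E}}$ and all $u,w\in\mathcal{U}(\mathcal{G})$: if $\mathcal{G}\models w\xrightarrow{s}u$, then for every string $t$ with $t\longrightarrow^{*}_{\mathbf{G}}s$ we have $\overline{\mathrm{H}}(\mathcal{G})\models w\xrightarrow{t}u$.
   Context: Fix a countably infinite set $\mathtt{S}$ of sequents (atomic labels), a set $\mathcal{U}$ of vertices, and a non-empty finite set $\mathtt{E}$ of edge types. A g-sequent is $\mathcal{G}=(\mathcal{V},\mathcal{E},\mathcal{L})$ with $\mathcal{V}\subseteq\mathcal{U}$ finite, $\mathcal{E}=\{\mathcal{E}_a\mid a\in\mathtt{E}\}$, $\mathcal{E}_a\subseteq\mathcal{V}\times\mathcal{V}$, $\mathcal{L}:\mathcal{V}\to\mathtt{S}$; $\mathcal U(\mathcal G)=\mathcal V$; written $\Gamma\vdash\Delta$ with $\Gamma$ the set of edge atoms $w\mathcal{E}_a u$ and $\Delta$ the set of prefixed sequents $w:S$; commas denote disjoint union. Let $\overline{\mathtt E}=\{\bar a\mid a\in\mathtt E\}$, $\bar{\bar z}=z$, $\overline{x_1\cdots x_n}=\bar x_n\cdots\bar x_1$, $\varepsilon$ empty string. Paths: $\mathcal{G}\models u\xrightarrow{a}w$ iff $(u,w)\in\mathcal{E}_a$; $\mathcal{G}\models u\xrightarrow{\bar a}w$ iff $(w,u)\in\mathcal{E}_a$;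 $u\xrightarrow{\varepsilon}w$ iff $u=w$; $u\xrightarrow{xs}w$ iff some $v$ has $u\xrightarrow{x}v$ and $v\xrightarrow{s}w$. For a set $\mathbf G$ of production rules $x\longrightarrow t$ ($x\in\mathtt E\cup\overline{\mathtt E}$), $t\longrightarrow_{\mathbf G}t'$ iff $t'$ arises from $t$ by replacing one occurrence of a left side by the corresponding right side, and $\longrightarrow^*_{\mathbf G}$ is its reflexive-transitive closure. For $s=x_1\cdots x_n$, $w\mathcal{E}_s u$ abbreviates edge atoms $w\mathcal{E}_{x_1}v_1,\dots,v_{n-1}\mathcal{E}_{x_n}u$, with $v\mathcal E_{\bar a}z$ meaning $z\mathcal E_a v$ and $w\mathcal E_\varepsilon u$ meaning $w=u$. A forward Horn rule $h_f$ (for $a\in\mathtt E$, string $s$) has premise $\Gamma,w\mathcal{E}_s u,w\mathcal{E}_a u\vdash\Delta$ and conclusion $\Gamma,w\mathcal{E}_s u\vdash\Delta$; a backward Horn rule $h_b$ is the same with $w\mathcal{E}_a u$ replaced by $u\mathcal{E}_a w$. $\mathbf{G}(h_f)=\{a\longrightarrow s,\bar a\longrightarrow\bar s\}$, $\mathbf{G}(h_b)=\{\bar a\longrightarrow s,a\longrightarrow\bar s\}$, $\mathbf G(\mathrm H)=\bigcup_{h\in\mathrm H}\mathbf G(h)$. Saturation: the inverse $\bar h$ of a Horn rule $h$ turns the conclusion of an instance of $h$ into its premise (i.e. adds the edge atom $w\mathcal E_a u$, resp. $u\mathcal E_a w$, whenever $w\mathcal E_s u$ is present). An application of $\bar h$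 to $\mathcal G$ is permissible iff it produces a g-sequent different from $\mathcal G$. $\overline{\mathrm H}(\mathcal G)$ denotes the g-sequent obtained from $\mathcal G$ by repeatedly performing permissible applications of rules $\bar h$, $h\in\mathrm H$, until none is possible (it is $\overline{\mathrm H}$-saturated: no application of any $\bar h$ changes it). *)

theory Defs
  imports Main "HOL-Library.Countable"
begin

text \<open>Letters of the alphabet E \<union> bar E: Fwd a stands for a, Bwd a for bar a.\<close>
datatype 'e letter = Fwd 'e | Bwd 'e

fun bar :: "'e letter \<Rightarrow> 'e letter" where
  "bar (Fwd a) = Bwd a"
| "bar (Bwd a) = Fwd a"

definition bar_str :: "'e letter list \<Rightarrow> 'e letter list" where
  "bar_str s = rev (map bar s)"

record ('u, 'e, 's) gseq =
  verts :: "'u set"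
  edges :: "'e \<Rightarrow> ('u \<times> 'u) set"
  lab :: "'u \<Rightarrow> 's"

definition wf_gseq :: "('u, 'e, 's) gseq \<Rightarrow> bool" where
  "wf_gseq G \<longleftrightarrow> finite (verts G) \<and> (\<forall>a. edges G a \<subseteq> verts G \<times> verts G)"

fun step :: "('u, 'e, 's) gseq \<Rightarrow> 'u \<Rightarrow> 'e letter \<Rightarrow> 'u \<Rightarrow> bool" where
  "step G u (Fwd a) w \<longleftrightarrow> (u, w) \<in> edges G a"
| "step G u (Bwd a) w \<longleftrightarrow> (w, u) \<in> edges G a"

text \<open>path G u s w  means  G |= u --s--> w\<close>
fun path :: "('u, 'e, 's) gseq \<Rightarrow> 'u \<Rightarrow> 'e letter list \<Rightarrow> 'u \<Rightarrow> bool" where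
  "path G u [] w \<longleftrightarrow> u = w"
| "path G u (x # s) w \<longleftrightarrow> (\<exists>v. step G u x v \<and> path G v s w)"

datatype 'e horn = HF 'e "'e letter list" | HB 'e "'e letter list"

fun grammar_of :: "'e horn \<Rightarrow> ('e letter \<times> 'e letter list) set" where
  "grammar_of (HF a s) = {(Fwd a, s), (Bwd a, bar_str s)}"
| "grammar_of (HB a s) = {(Bwd a, s), (Fwd a, bar_str s)}"

definition grammar :: "'e horn set \<Rightarrow> ('e letter \<times> 'e letter list) set" where
  "grammar H = (\<Union>h\<in>H. grammar_of h)"

inductive derive1 :: "('e letter \<times> 'e letter list) set \<Rightarrow> 'e letter list \<Rightarrow> 'e letter list \<Rightarrow> bool"
  for Gr where
  "(x, r) \<in> Gr \<Longrightarrow> derive1 Gr (p @ [x] @ q) (p @ r @ q)"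

definition derives :: "('e letter \<times> 'e letter list) set \<Rightarrow> 'e letter list \<Rightarrow> 'e letter list \<Rightarrow> bool" where
  "derives Gr = (derive1 Gr)\<^sup>*\<^sup>*"

definition add_edge :: "('u, 'e, 's) gseq \<Rightarrow> 'e \<Rightarrow> 'u \<Rightarrow> 'u \<Rightarrow> ('u, 'e, 's) gseq" where
  "add_edge G a x y = G\<lparr>edges := (edges G)(a := insert (x, y) (edges G a))\<rparr>"

text \<open>Result of one application of the inverse rule bar h to G (at vertices w, u).\<close>
inductive inv_app :: "'e horn \<Rightarrow> ('u, 'e, 's) gseq \<Rightarrow> ('u, 'e, 's) gseq \<Rightarrow> bool" where
  "\<lbrakk>w \<in> verts G; u \<in> verts G; path G w s u\<rbrakk> \<Longrightarrow> inv_app (HF a s) G (add_edge G a w u)"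
| "\<lbrakk>w \<in> verts G; u \<in> verts G; path G w s u\<rbrakk> \<Longrightarrow> inv_app (HB a s) G (add_edge G a u w)"

text \<open>A permissible application of some bar h, h in H.\<close>
definition sat_step :: "'e horn set \<Rightarrow> ('u, 'e, 's) gseq \<Rightarrow> ('u, 'e, 's) gseq \<Rightarrow> bool" where
  "sat_step H G G' \<longleftrightarrow> (\<exists>h\<in>H. inv_app h G G') \<and> G' \<noteq> G"

definition saturated :: "'e horn set \<Rightarrow> ('u, 'e, 's) gseq \<Rightarrow> bool" where
  "saturated H G \<longleftrightarrow> (\<forall>h\<in>H. \<forall>G'. inv_app h G G' \<longrightarrow> G' = G)"

text \<open>G' is a result of H-bar(G): obtained by permissible applications until saturated.\<close>
definition is_saturation :: "'e horn set \<Rightarrow> ('u, 'e, 's) gseq \<Rightarrow> ('u, 'e, 's) gseq \<Rightarrow> bool" where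
  "is_saturation H G G' \<longleftrightarrow> (sat_step H)\<^sup>*\<^sup>* G G' \<and> saturated H G'"

end

theory Submission
  imports Defs
begin

text \<open>Saturation only adds edges, so every path of \<open>G\<close> survives in the saturation. In a
  saturated g-sequent every production \<open>x \<longrightarrow> r\<close> of \<open>G(H)\<close> can be read backwards: an
  \<open>r\<close>-path from \<open>v\<^sub>1\<close> to \<open>v\<^sub>2\<close> comes with an \<open>x\<close>-step, since otherwise the inverse of the
  Horn rule producing \<open>x \<longrightarrow> r\<close> would still add an edge. Hence a derivation step from \<open>t\<close>
  to \<open>s\<close> turns \<open>s\<close>-paths into \<open>t\<close>-paths, and induction along the derivation gives the claim.\<close>

lemma path_append: "path G u (s @ t) w \<longleftrightarrow> (\<exists>v. path G u s v \<and> path G v t w)"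
  by (induction s arbitrary: u) auto

lemma step_bar: "step G u (bar x) w \<longleftrightarrow> step G w x u"
  by (cases x) auto

lemma path_bar_str: "path G u (bar_str s) w \<longleftrightarrow> path G w s u"
proof (induction s arbitrary: u w)
  case Nil
  then show ?case by (auto simp: bar_str_def)
next
  case (Cons x s)
  have "path G u (bar_str (x # s)) w \<longleftrightarrow> path G u (bar_str s @ [bar x]) w"
    by (simp add: bar_str_def)
  also have "\<dots> \<longleftrightarrow> (\<exists>v. path G v s u \<and> step G w x v)"
    by (simp add: path_append Cons step_bar)
  finally show ?case by auto
qed

lemma path_mono:
  assumes "\<And>b. edges G b \<subseteq> edges G' b" and "path G u s w"
  shows "path G' u s w"
proof -
  have step_mono: "step G' v x v'" if "step G v x v'" for v x v'
    using that assms(1) by (cases x) auto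
  show ?thesis using assms(2) by (induction s arbitrary: u) (auto intro: step_mono)
qed

lemma path_in_verts: "wf_gseq G \<Longrightarrow> u \<in> verts G \<Longrightarrow> path G u s w \<Longrightarrow> w \<in> verts G"
proof (induction s arbitrary: u)
  case (Cons x s)
  then show ?case by (cases x) (auto simp: wf_gseq_def)
qed simp

lemma inv_app_adds_edges:
  assumes "inv_app h G G'"
  shows "verts G' = verts G" "\<And>b. edges G b \<subseteq> edges G' b" "wf_gseq G \<Longrightarrow> wf_gseq G'"
  using assms by (induction rule: inv_app.induct) (auto simp: add_edge_def wf_gseq_def)

lemma sat_steps_adds_edges:
  assumes "(sat_step H)\<^sup>*\<^sup>* G G'" and "wf_gseq G"
  shows "wf_gseq G' \<and> verts G' = verts G \<and> (\<forall>b. edges G b \<subseteq> edges G' b)"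
  using assms
proof (induction rule: rtranclp_induct)
  case (step G' G'')
  then obtain h where h: "inv_app h G' G''" by (auto simp: sat_step_def)
  have "wf_gseq G' \<and> verts G' = verts G \<and> (\<forall>b. edges G b \<subseteq> edges G' b)"
    using step.IH step.prems .
  with inv_app_adds_edges[OF h] show ?case by (metis order_trans)
qed simp

lemma saturated_edge:
  assumes "saturated H G" and "h \<in> H" and "inv_app h G (add_edge G a x y)"
  shows "(x, y) \<in> edges G a"
proof -
  have "add_edge G a x y = G" using assms by (auto simp: saturated_def)
  then have "edges (add_edge G a x y) a = edges G a" by simp
  then show ?thesis by (auto simp: add_edge_def)
qed

lemma saturated_step_of_production:
  assumes sat: "saturated H G" and wf: "wf_gseq G"
    and prod: "(x, r) \<in> grammar H" and v1: "v1 \<in> verts G" and p: "path G v1 r v2"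
  shows "step G v1 x v2"
proof -
  have v2: "v2 \<in> verts G" using path_in_verts[OF wf v1 p] .
  from prod obtain h where h: "h \<in> H" "(x, r) \<in> grammar_of h" by (auto simp: grammar_def)
  have edge: "(v, v') \<in> edges G a"
    if "inv_app h G (add_edge G a v v')" for a v v'
    using saturated_edge[OF sat h(1) that] .
  show ?thesis
  proof (cases h)
    case (HF a s)
    have fwd: "(v, v') \<in> edges G a" if "v \<in> verts G" "v' \<in> verts G" "path G v s v'" for v v'
      using edge[of a v v'] inv_app.intros(1)[OF that, of a] HF by simp
    from HF h p have "x = Fwd a \<and> path G v1 s v2 \<or> x = Bwd a \<and> path G v2 s v1"
      by (auto simp: path_bar_str)
    then show ?thesis using fwd[OF v1 v2] fwd[OF v2 v1] by (elim disjE) simp_all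
  next
    case (HB a s)
    have bwd: "(v', v) \<in> edges G a" if "v \<in> verts G" "v' \<in> verts G" "path G v s v'" for v v'
      using edge[of a v' v] inv_app.intros(2)[OF that, of a] HB by simp
    from HB h p have "x = Bwd a \<and> path G v1 s v2 \<or> x = Fwd a \<and> path G v2 s v1"
      by (auto simp: path_bar_str)
    then show ?thesis using bwd[OF v1 v2] bwd[OF v2 v1] by (elim disjE) simp_all
  qed
qed

lemma derive1_reflects_path:
  assumes sat: "saturated H G" and wf: "wf_gseq G"
    and w: "w \<in> verts G" and d: "derive1 (grammar H) t s" and p: "path G w s u"
  shows "path G w t u"
  using d
proof cases
  case (1 x r pre post)
  from p 1 obtain v1 v2 where
    pre: "path G w pre v1" and mid: "path G v1 r v2" and post: "path G v2 post u"
    by (auto simp: path_append)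
  have "step G v1 x v2"
    using saturated_step_of_production[OF sat wf 1(3) path_in_verts[OF wf w pre] mid] .
  with 1 pre post show ?thesis by (auto simp: path_append)
qed

lemma derives_reflects_path:
  assumes "saturated H G" and "wf_gseq G" and "w \<in> verts G"
    and "derives (grammar H) t s" and "path G w s u"
  shows "path G w t u"
  using assms(4,5) unfolding derives_def
  by (induction rule: converse_rtranclp_induct)
    (blast intro: derive1_reflects_path[OF assms(1-3)])+

theorem mainTheorem6:
  fixes H :: "('e::finite) horn set"
    and G Gsat :: "('u, 'e, 's::countable) gseq"
  assumes "infinite (UNIV :: 's set)"
    and "wf_gseq G"
    and "is_saturation H G Gsat"
    and "w \<in> verts G" and "u \<in> verts G"
    and "path G w s u"
    and "derives (grammar H) t s"
  shows "path Gsat w t u"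
proof -
  from assms(3) have steps: "(sat_step H)\<^sup>*\<^sup>* G Gsat" and sat: "saturated H Gsat"
    by (auto simp: is_saturation_def)
  have wf: "wf_gseq Gsat" and w: "w \<in> verts Gsat"
    and edges: "\<And>b. edges G b \<subseteq> edges Gsat b"
    using sat_steps_adds_edges[OF steps assms(2)] assms(4) by auto
  have "path Gsat w s u" using path_mono[OF edges assms(6)] .
  then show ?thesis using derives_reflects_path[OF sat wf w assms(7)] by blast
qed

end
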